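(* Let $n\ge3$ be odd and write $c_j=\cos(2\pi j/n)$. Then $$Su_2:=\frac32\sum_{j=0}^{\lfloor n/4\rfloor}\ \sum_{k=\lceil n/4\rceil}^{(n-1)/2}\frac{1}{|c_j-c_k+1|}\ \le\ \frac{3}{32}\,n^2.$$
   Context: No additional context beyond the notation $c_j=\cos(2\pi j/n)$. *)

theory Defs
  imports Complex_Main
begin

definition cc :: "nat \<Rightarrow> nat \<Rightarrow> real" where
  "cc n j = cos (2 * pi * real j / real n)"

end

theory Submission
  imports Defs
begin

text \<open>For \<open>j \<le> n/4 \<le> k \<le> n/2\<close> we have \<open>c\<^sub>j \<ge> 0 \<ge> c\<^sub>k\<close>, so each summand is at most 1,
  and at most \<open>1/2\<close> when \<open>j = 0\<close> (as \<open>c\<^sub>0 = 1\<close>). Writing \<open>n = 4q + r\<close> with \<open>r \<in> {1, 3}\<close>,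
  the sum over the \<open>q + 1\<close> values of \<open>j\<close> and the \<open>q\<close> or \<open>q + 1\<close> values of \<open>k\<close> is then
  at most \<open>(q + 1/2) \<cdot> #k \<le> n\<^sup>2/16\<close>.\<close>

lemma cc_0 [simp]: "cc n 0 = 1"
  by (simp add: cc_def)

lemma cc_nonneg:
  assumes "4 * j \<le> n"
  shows "cc n j \<ge> 0"
proof (cases "n = 0")
  case False
  have "2 * pi * real j / real n \<le> pi / 2"
    using assms False by (simp add: field_simps)
  then show ?thesis
    unfolding cc_def by (intro cos_ge_zero) (auto intro: order_trans[of _ 0] simp: pi_ge_zero)
qed (simp add: cc_def)

lemma cc_nonpos:
  assumes "0 < n" "n \<le> 4 * k" "2 * k \<le> n"
  shows "cc n k \<le> 0"
proof -
  have "pi / 2 \<le> 2 * pi * real k / real n" "2 * pi * real k / real n \<le> pi"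
    using assms by (simp_all add: field_simps)
  then show ?thesis
    unfolding cc_def using cos_monotone_0_pi_le[of "pi / 2"] by (simp add: pi_ge_zero)
qed

lemma inverse_cc_diff_le:
  assumes "0 < n" "4 * j \<le> n" "n \<le> 4 * k" "2 * k \<le> n"
  shows "1 / \<bar>cc n j - cc n k + 1\<bar> \<le> (if j = 0 then 1 / 2 else 1)"
  using cc_nonneg[OF assms(2)] cc_nonpos[OF assms(1,3,4)] by auto

lemma sum_first_term_halved_le:
  fixes g :: "nat \<Rightarrow> 'b \<Rightarrow> real"
  assumes "\<And>j k. j \<le> a \<Longrightarrow> k \<in> B \<Longrightarrow> g j k \<le> (if j = 0 then 1 / 2 else 1)"
  shows "(\<Sum>j = 0..a. \<Sum>k\<in>B. g j k) \<le> (real a + 1 / 2) * real (card B)"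
proof -
  have "(\<Sum>j = 0..a. \<Sum>k\<in>B. g j k) \<le> (\<Sum>j = 0..a. \<Sum>k\<in>B. if j = 0 then 1 / 2 else 1)"
    by (intro sum_mono) (use assms in auto)
  also have "\<dots> = real (card B) / 2 + (\<Sum>j = 1..a. real (card B))"
    by (simp add: sum.atLeast_Suc_atMost)
  also have "\<dots> = (real a + 1 / 2) * real (card B)"
    by (simp add: algebra_simps)
  finally show ?thesis .
qed

lemma ceiling_quarter_odd:
  assumes "odd n"
  shows "\<lceil>real n / 4\<rceil> = int (n div 4) + 1"
proof -
  have "n mod 4 = 1 \<or> n mod 4 = 3" using assms by presburger
  moreover have "real n = 4 * real (n div 4) + real (n mod 4)"
    by (metis div_mult_mod_eq of_nat_add of_nat_mult of_nat_numeral mult.commute)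
  ultimately show ?thesis
    by (intro ceiling_unique) (auto simp: field_simps)
qed

theorem mainTheorem5:
  fixes n :: nat
  assumes "n \<ge> 3" and "odd n"
  shows "3 / 2 * (\<Sum>j = 0..nat \<lfloor>real n / 4\<rfloor>. \<Sum>k = nat \<lceil>real n / 4\<rceil>..(n - 1) div 2.
            1 / \<bar>cc n j - cc n k + 1\<bar>) \<le> 3 / 32 * (real n)^2"
proof -
  define q where "q = n div 4"
  have floor: "nat \<lfloor>real n / 4\<rfloor> = q"
    using floor_divide_of_nat_eq[of n 4, where 'a=real] by (simp add: q_def)
  have ceiling: "nat \<lceil>real n / 4\<rceil> = q + 1"
    using ceiling_quarter_odd[OF assms(2)] by (simp add: q_def)
  have "(\<Sum>j = 0..q. \<Sum>k = q + 1..(n - 1) div 2. 1 / \<bar>cc n j - cc n k + 1\<bar>)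
      \<le> (real q + 1 / 2) * real (card {q + 1..(n - 1) div 2})"
    by (intro sum_first_term_halved_le inverse_cc_diff_le) (auto simp: q_def)
  also have "\<dots> \<le> (real n)\<^sup>2 / 16"
  proof -
    have "n = 4 * q + 1 \<and> (n - 1) div 2 = 2 * q \<or> n = 4 * q + 3 \<and> (n - 1) div 2 = 2 * q + 1"
      using assms(2) unfolding q_def by presburger
    then show ?thesis
      by (auto simp: power2_eq_square algebra_simps)
  qed
  finally show ?thesis
    unfolding floor ceiling by simp
qed

end
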